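(* Let $\sigma$ be a connected non-crossing partition and let $\tau=1[\rho]$ for some non-crossing partition $\rho$. If $\sigma$ and $\tau$ are nc-equivalent, then $1[\sigma]$ and $\tau1=1[\rho]1$ are nc-equivalent.
   Context: Set partitions are written in canonical sequential form (restricted growth words). Pattern containment means having a subsequence order-isomorphic to the pattern; a partition is non-crossing if it avoids $1212$. Bracket notation: in a word built from letters and bracketed partitions, $[\sigma]$ stands for $\sigma+r$ (add $r$ to every letter), where $r$ is the number of distinct symbols appearing before it; so $1[\rho]$ is $1$ followed by $\rho+1$, and $1[\rho]1$ appends a final $1$. $\alpha[\beta]$ is $\alpha$ followed by $\beta$ shifted by the number of blocks of $\alpha$; a partition is connected if it cannot be written as $\alpha[\beta]$ with $\alpha,\beta$ nonempty. Patterns $\alpha,\beta$ are nc-equivalent if for every $n\ge0$ the number of partitions of $[n]$ avoiding $1212$ and $\alpha$ equals the number avoiding $1212$ and $\beta$. *)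

theory Defs
  imports Main
begin

text \<open>Set partitions in canonical sequential form: restricted growth words over
positive integers.\<close>

definition rgf :: "nat list \<Rightarrow> bool" where
  "rgf w \<longleftrightarrow> (\<forall>i < length w. 1 \<le> w ! i \<and> w ! i \<le> Suc (Max (insert 0 (set (take i w)))))"

definition contains :: "nat list \<Rightarrow> nat list \<Rightarrow> bool" where
  "contains w p \<longleftrightarrow> (\<exists>f :: nat \<Rightarrow> nat.
      (\<forall>i j. i < j \<longrightarrow> j < length p \<longrightarrow> f i < f j) \<and>
      (\<forall>i < length p. f i < length w) \<and>
      (\<forall>i < length p. \<forall>j < length p. (p ! i \<le> p ! j \<longleftrightarrow> w ! f i \<le> w ! f j)))"

definition avoids :: "nat list \<Rightarrow> nat list \<Rightarrow> bool" where
  "avoids w p \<longleftrightarrow> \<not> contains w p"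

definition noncrossing :: "nat list \<Rightarrow> bool" where
  "noncrossing w \<longleftrightarrow> avoids w [1,2,1,2]"

definition nblocks :: "nat list \<Rightarrow> nat" where
  "nblocks w = card (set w)"

definition shift :: "nat \<Rightarrow> nat list \<Rightarrow> nat list" where
  "shift r w = map (\<lambda>x. x + r) w"

definition concat_part :: "nat list \<Rightarrow> nat list \<Rightarrow> nat list" where
  "concat_part \<alpha> \<beta> = \<alpha> @ shift (nblocks \<alpha>) \<beta>"

definition connected_part :: "nat list \<Rightarrow> bool" where
  "connected_part \<sigma> \<longleftrightarrow>
     \<not> (\<exists>\<alpha> \<beta>. rgf \<alpha> \<and> rgf \<beta> \<and> \<alpha> \<noteq> [] \<and> \<beta> \<noteq> [] \<and> \<sigma> = concat_part \<alpha> \<beta>)"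

definition nc_count :: "nat list \<Rightarrow> nat \<Rightarrow> nat" where
  "nc_count \<alpha> n = card {w. rgf w \<and> length w = n \<and> noncrossing w \<and> avoids w \<alpha>}"

definition nc_equiv :: "nat list \<Rightarrow> nat list \<Rightarrow> bool" where
  "nc_equiv \<alpha> \<beta> \<longleftrightarrow> (\<forall>n. nc_count \<alpha> n = nc_count \<beta> n)"

end

theory Submission
  imports Defs "HOL-Library.Sublist"
begin

text \<open>
  Every nonempty non-crossing partition factors uniquely as \<open>u 1 [s]\<close>, splitting at the last
  occurrence of 1; the letters after it all exceed those before it (otherwise \<open>1 c 1 c\<close> would
  be a crossing), and \<open>u\<close>, \<open>s\<close> are again non-crossing. Since \<open>\<sigma>\<close> is connected,
  \<open>u 1 [s]\<close> avoids \<open>1[\<sigma>]\<close> iff \<open>u\<close> avoids \<open>1[\<sigma>]\<close> and \<open>s\<close> avoids \<open>\<sigma>\<close>; since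
  \<open>\<tau>1 = 1[\<rho>]1\<close> is connected, \<open>u 1 [s]\<close> avoids \<open>\<tau>1\<close> iff \<open>u\<close> avoids \<open>\<tau>\<close> and \<open>s\<close> avoids
  \<open>\<tau>1\<close>. With \<open>a\<^sub>n\<close> the common count for \<open>\<sigma>\<close> and \<open>\<tau>\<close>, the counts \<open>f\<close> for \<open>1[\<sigma>]\<close>
  and \<open>g\<close> for \<open>\<tau>1\<close> satisfy \<open>f\<^sub>n\<^sub>+\<^sub>1 = \<Sum> f\<^sub>i a\<^sub>n\<^sub>-\<^sub>i\<close> and
  \<open>g\<^sub>n\<^sub>+\<^sub>1 = \<Sum> a\<^sub>i g\<^sub>n\<^sub>-\<^sub>i\<close> with \<open>f\<^sub>0 = g\<^sub>0 = 1\<close>, so \<open>f = g\<close> by commutativity of convolution.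
\<close>

section \<open>Order isomorphism and pattern containment\<close>

lemma set_subseq_subset: "subseq xs ys \<Longrightarrow> set xs \<subseteq> set ys"
  by (metis subseq_conv_nths set_nths_subset)

lemma subseq_snocD: "subseq q (u @ [y]) \<Longrightarrow> subseq q u \<or> (\<exists>q'. q = q' @ [y] \<and> subseq q' u)"
proof -
  assume "subseq q (u @ [y])"
  then obtain q1 q2 where "q = q1 @ q2" "subseq q1 u" "subseq q2 [y]" by (rule subseq_appendE)
  moreover have "q2 = [] \<or> q2 = [y]" using \<open>subseq q2 [y]\<close>
    by (cases q2) (auto split: if_splits)
  ultimately show ?thesis by auto
qed

lemma append_Cons_eq_iff_right:
  "x \<notin> set ys \<Longrightarrow> x \<notin> set ys' \<Longrightarrow> xs @ x # ys = xs' @ x # ys' \<longleftrightarrow> xs = xs' \<and> ys = ys'"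
  by (auto simp: append_eq_Cons_conv Cons_eq_append_conv append_eq_append_conv2)

definition order_iso :: "nat list \<Rightarrow> nat list \<Rightarrow> bool" where
  "order_iso q p \<longleftrightarrow> length q = length p \<and>
     (\<forall>i<length p. \<forall>j<length p. (p ! i \<le> p ! j \<longleftrightarrow> q ! i \<le> q ! j))"

lemma order_iso_length: "order_iso q p \<Longrightarrow> length q = length p"
  unfolding order_iso_def by auto

lemma order_iso_less_iff:
  "order_iso q p \<Longrightarrow> i < length p \<Longrightarrow> j < length p \<Longrightarrow> p ! i < p ! j \<longleftrightarrow> q ! i < q ! j"
  unfolding order_iso_def by (meson not_le)

lemma order_iso_shift_left_iff [simp]: "order_iso (shift r q) p \<longleftrightarrow> order_iso q p"
  unfolding order_iso_def shift_def by auto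

lemma order_iso_shift_right_iff [simp]: "order_iso q (shift r p) \<longleftrightarrow> order_iso q p"
  unfolding order_iso_def shift_def by auto

lemma order_iso_take: "order_iso q p \<Longrightarrow> order_iso (take k q) (take k p)"
  unfolding order_iso_def by auto

lemma order_iso_Cons_iff:
  "order_iso (y # q) (x # p) \<longleftrightarrow> order_iso q p \<and>
     (\<forall>i<length p. (x \<le> p ! i \<longleftrightarrow> y \<le> q ! i) \<and> (p ! i \<le> x \<longleftrightarrow> q ! i \<le> y))"
  unfolding order_iso_def by (auto simp: less_Suc_eq_0_disj nth_Cons split: nat.splits)

lemma order_iso_snoc_iff:
  "length q = length p \<Longrightarrow> order_iso (q @ [y]) (p @ [x]) \<longleftrightarrow> order_iso q p \<and>
     (\<forall>i<length p. (x \<le> p ! i \<longleftrightarrow> y \<le> q ! i) \<and> (p ! i \<le> x \<longleftrightarrow> q ! i \<le> y))"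
  unfolding order_iso_def by (auto simp: nth_append less_Suc_eq)

lemma order_iso_Cons_min:
  assumes "order_iso q p" "\<forall>a\<in>set q. y < a" "\<forall>b\<in>set p. x < b"
  shows "order_iso (y # q) (x # p)"
proof -
  have "x < p ! i" "y < q ! i" if "i < length p" for i
    using assms that order_iso_length[OF assms(1)] by simp_all
  then show ?thesis using assms(1) unfolding order_iso_Cons_iff by (meson less_imp_le leD)
qed

lemma order_iso_Cons_minD:
  assumes "order_iso (y # q) (x # p)" "\<forall>b\<in>set p. x < b"
  shows "order_iso q p" "\<forall>a\<in>set q. y < a"
proof -
  show iso: "order_iso q p" using assms(1) by (simp add: order_iso_Cons_iff)
  show "\<forall>a\<in>set q. y < a"
  proof
    fix a assume "a \<in> set q"
    then obtain i where i: "i < length p" "a = q ! i"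
      using order_iso_length[OF iso] by (auto simp: in_set_conv_nth)
    then have "x < p ! i" using assms(2) by auto
    then show "y < a" using assms(1) i by (auto simp: order_iso_Cons_iff)
  qed
qed

lemma order_iso_wrap:
  assumes iso: "order_iso q p" and "\<forall>a\<in>set q. y < a" "\<forall>b\<in>set p. x < b"
  shows "order_iso (y # q @ [y]) (x # p @ [x])"
proof -
  have len: "length q = length p" using order_iso_length[OF iso] .
  have below: "x < p ! i" "y < q ! i" if "i < length p" for i
    using assms that len by simp_all
  then have "order_iso (q @ [y]) (p @ [x])"
    using iso len unfolding order_iso_snoc_iff[OF len] by (meson less_imp_le leD)
  moreover have "(x \<le> (p @ [x]) ! i \<longleftrightarrow> y \<le> (q @ [y]) ! i) \<and> ((p @ [x]) ! i \<le> x \<longleftrightarrow> (q @ [y]) ! i \<le> y)"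
    if "i < Suc (length p)" for i
    using that below[of i] len by (cases "i < length p") (auto simp: nth_append)
  ultimately show ?thesis by (simp add: order_iso_Cons_iff)
qed

lemma subseq_map_nth:
  assumes "\<forall>i j. i < j \<longrightarrow> j < m \<longrightarrow> f i < f j" "\<forall>i<m. f i < length w"
  shows "subseq (map (\<lambda>i. w ! f i) [0..<m]) w"
  using assms
proof (induction m arbitrary: w)
  case 0
  then show ?case by simp
next
  case (Suc m)
  have "subseq (map (\<lambda>i. take (f m) w ! f i) [0..<m]) (take (f m) w)"
    using Suc.prems by (intro Suc.IH) auto
  moreover have "map (\<lambda>i. take (f m) w ! f i) [0..<m] = map (\<lambda>i. w ! f i) [0..<m]"
    using Suc.prems by auto
  ultimately have "subseq (map (\<lambda>i. w ! f i) [0..<m] @ [w ! f m])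
      (take (f m) w @ [w ! f m] @ drop (Suc (f m)) w)"
    by (intro list_emb_append_mono) simp_all
  moreover have "take (f m) w @ [w ! f m] @ drop (Suc (f m)) w = w"
    using Suc.prems by (simp add: id_take_nth_drop[symmetric])
  ultimately show ?case by simp
qed

lemma subseq_obtain_indices:
  assumes "subseq q w"
  obtains f where "\<forall>i j. i < j \<longrightarrow> j < length q \<longrightarrow> f i < f j"
    "\<forall>i<length q. f i < length w" "\<forall>i<length q. q ! i = w ! f i"
  using assms
proof (induction arbitrary: thesis rule: list_emb.induct)
  case (list_emb_Nil ys)
  then show ?case by auto
next
  case (list_emb_Cons xs ys y)
  show ?case
  proof (rule list_emb_Cons.IH)
    fix f assume "\<forall>i j. i < j \<longrightarrow> j < length xs \<longrightarrow> f i < f j"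
      "\<forall>i<length xs. f i < length ys" "\<forall>i<length xs. xs ! i = ys ! f i"
    then show thesis by (intro list_emb_Cons.prems[of "\<lambda>i. Suc (f i)"]) auto
  qed
next
  case (list_emb_Cons2 x y xs ys)
  show ?case
  proof (rule list_emb_Cons2.IH)
    fix f assume f: "\<forall>i j. i < j \<longrightarrow> j < length xs \<longrightarrow> f i < f j"
      "\<forall>i<length xs. f i < length ys" "\<forall>i<length xs. xs ! i = ys ! f i"
    let ?g = "\<lambda>i. case i of 0 \<Rightarrow> 0 | Suc k \<Rightarrow> Suc (f k)"
    show thesis
    proof (rule list_emb_Cons2.prems[of ?g], safe)
      fix i j assume "i < j" "j < length (x # xs)"
      then show "?g i < ?g j" using f by (cases i; cases j) auto
    next
      fix i assume "i < length (x # xs)"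
      then show "?g i < length (y # ys)" "(x # xs) ! i = (y # ys) ! ?g i"
        using f list_emb_Cons2.hyps by (cases i; auto)+
    qed
  qed
qed

lemma contains_iff_subseq_order_iso: "contains w p \<longleftrightarrow> (\<exists>q. subseq q w \<and> order_iso q p)"
proof
  assume "contains w p"
  then obtain f where f: "\<forall>i j. i < j \<longrightarrow> j < length p \<longrightarrow> f i < f j"
      "\<forall>i < length p. f i < length w"
      "\<forall>i < length p. \<forall>j < length p. (p ! i \<le> p ! j \<longleftrightarrow> w ! f i \<le> w ! f j)"
    unfolding contains_def by blast
  then show "\<exists>q. subseq q w \<and> order_iso q p"
    using subseq_map_nth[OF f(1,2)] by (auto simp: order_iso_def)
next
  assume "\<exists>q. subseq q w \<and> order_iso q p"
  then obtain q where q: "subseq q w" "order_iso q p" by blast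
  obtain f where "\<forall>i j. i < j \<longrightarrow> j < length q \<longrightarrow> f i < f j"
    "\<forall>i<length q. f i < length w" "\<forall>i<length q. q ! i = w ! f i"
    using subseq_obtain_indices[OF q(1)] .
  then show "contains w p"
    using q(2) unfolding contains_def order_iso_def by (intro exI[of _ f]) auto
qed

lemma contains_subseq_trans: "contains v p \<Longrightarrow> subseq v w \<Longrightarrow> contains w p"
  unfolding contains_iff_subseq_order_iso using subseq_order.trans by blast

lemma contains_appendI1: "contains u p \<Longrightarrow> contains (u @ v) p"
  using contains_subseq_trans subseq_rev_drop_many by blast

lemma contains_appendI2: "contains v p \<Longrightarrow> contains (u @ v) p"
  using contains_subseq_trans subseq_drop_many by blast

lemma contains_shift_iff: "contains (shift r w) p \<longleftrightarrow> contains w p"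
  unfolding contains_def shift_def by (auto cong: conj_cong)

lemma contains_Nil_pattern [simp]: "contains w []"
  unfolding contains_def by simp

lemma contains_Nil_iff [simp]: "contains [] p \<longleftrightarrow> p = []"
  unfolding contains_def by auto

lemma contains_append_patternD: "contains w (p @ r) \<Longrightarrow> contains w p"
  unfolding contains_iff_subseq_order_iso
  by (metis order_iso_take append_eq_conv_conj prefix_imp_subseq take_is_prefix subseq_order.trans)

lemma contains_snoc_min_letter:
  assumes "contains (w @ [m]) p" "\<forall>x\<in>set w. m \<le> x" "i < length p" "p ! i < last p"
  shows "contains w p"
proof -
  obtain q where q: "subseq q (w @ [m])" "order_iso q p"
    using assms(1) unfolding contains_iff_subseq_order_iso by blast
  show ?thesis
  proof (cases "subseq q w")
    case True
    then show ?thesis using q(2) unfolding contains_iff_subseq_order_iso by blast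
  next
    case False
    then obtain q' where q': "q = q' @ [m]" using subseq_snocD[OF q(1)] by blast
    have len: "length q = length p" using order_iso_length[OF q(2)] .
    have "q ! i \<in> set (w @ [m])" using set_subseq_subset[OF q(1)] assms(3) len by (metis nth_mem subsetD)
    then have "m \<le> q ! i" using assms(2) by auto
    moreover have "p \<noteq> []" "q \<noteq> []" using assms(3) len by auto
    then have "last p = p ! (length p - 1)" "last q = q ! (length p - 1)"
      using len by (simp_all add: last_conv_nth)
    then have "q ! i < last q" using order_iso_less_iff[OF q(2)] assms(3,4) by auto
    ultimately show ?thesis using q' by simp
  qed
qed

section \<open>Order-connected patterns\<close>

text \<open>The order-theoretic form of connectedness: no proper prefix lies entirely below the rest.\<close>

definition order_connected :: "nat list \<Rightarrow> bool" where
  "order_connected p \<longleftrightarrow> (\<forall>k. 0 < k \<longrightarrow> k < length p \<longrightarrow>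
     \<not> (\<forall>i<k. \<forall>j. k \<le> j \<longrightarrow> j < length p \<longrightarrow> p ! i < p ! j))"

lemma order_iso_append_separated:
  assumes iso: "order_iso (a @ b) p" and conn: "order_connected p"
    and sep: "\<forall>x\<in>set a. \<forall>y\<in>set b. x < y"
  shows "a = [] \<or> b = []"
proof (rule ccontr)
  assume "\<not> (a = [] \<or> b = [])"
  then have pos: "0 < length a" "0 < length b" by auto
  have len: "length a + length b = length p" using order_iso_length[OF iso] by simp
  have "p ! i < p ! j" if "i < length a" "length a \<le> j" "j < length p" for i j
  proof -
    have "(a @ b) ! i \<in> set a" "(a @ b) ! j \<in> set b"
      using that len by (auto simp: nth_append)
    then show ?thesis using sep order_iso_less_iff[OF iso] that by auto
  qed
  moreover have "length a < length p" using pos len by linarith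
  ultimately show False using pos(1) conn unfolding order_connected_def by blast
qed

lemma contains_append_separated_iff:
  assumes conn: "order_connected p" and sep: "\<forall>x\<in>set u. \<forall>y\<in>set v. x < y"
  shows "contains (u @ v) p \<longleftrightarrow> contains u p \<or> contains v p"
proof
  assume "contains (u @ v) p"
  then obtain q where q: "subseq q (u @ v)" "order_iso q p"
    unfolding contains_iff_subseq_order_iso by blast
  from q(1) obtain q1 q2 where q12: "q = q1 @ q2" "subseq q1 u" "subseq q2 v"
    by (rule subseq_appendE)
  have "\<forall>x\<in>set q1. \<forall>y\<in>set q2. x < y"
    using sep set_subseq_subset[OF q12(2)] set_subseq_subset[OF q12(3)] by blast
  then have "q1 = [] \<or> q2 = []"
    by (rule order_iso_append_separated[OF q(2)[unfolded q12(1)] conn])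
  then have "subseq q u \<or> subseq q v" using q12 by auto
  then show "contains u p \<or> contains v p"
    using q(2) unfolding contains_iff_subseq_order_iso by blast
qed (blast intro: contains_appendI1 contains_appendI2)

lemma order_connected_1212: "order_connected [1, 2, 1, 2]"
  unfolding order_connected_def
proof (intro allI impI notI)
  fix k :: nat
  assume k: "0 < k" "k < length [1::nat, 2, 1, 2]"
    and sep: "\<forall>i<k. \<forall>j. k \<le> j \<longrightarrow> j < length [1::nat, 2, 1, 2] \<longrightarrow> [1::nat, 2, 1, 2] ! i < [1, 2, 1, 2] ! j"
  then consider "k = 1" | "k = 2" | "k = 3" by force
  then show False
    by cases (use sep[rule_format, of 0 2] sep[rule_format, of 1 3] in simp_all)
qed

lemma order_connected_wrap: "order_connected (x # r @ [x])"
  unfolding order_connected_def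
proof (intro allI impI notI)
  fix k assume "0 < k" "k < length (x # r @ [x])"
    and sep: "\<forall>i<k. \<forall>j. k \<le> j \<longrightarrow> j < length (x # r @ [x]) \<longrightarrow> (x # r @ [x]) ! i < (x # r @ [x]) ! j"
  then have "(x # r @ [x]) ! 0 < (x # r @ [x]) ! Suc (length r)"
    using sep[rule_format, of 0 "Suc (length r)"] by simp
  then show False by (simp add: nth_append)
qed

definition max_letter :: "nat list \<Rightarrow> nat" where
  "max_letter w = Max (insert 0 (set w))"

lemma le_max_letter: "a \<in> set w \<Longrightarrow> a \<le> max_letter w"
  unfolding max_letter_def by simp

lemma max_letter_in_set: "w \<noteq> [] \<Longrightarrow> max_letter w \<in> set w"
proof -
  assume "w \<noteq> []"
  have "max_letter w \<in> insert 0 (set w)" unfolding max_letter_def by (rule Max_in) auto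
  moreover have "max_letter w = 0 \<Longrightarrow> set w \<subseteq> {0}" using le_max_letter by fastforce
  ultimately show ?thesis using \<open>w \<noteq> []\<close> by (cases w) auto
qed

lemma max_letter_snoc: "max_letter (w @ [a]) = max a (max_letter w)"
proof -
  have "insert 0 (set (w @ [a])) = insert a (insert 0 (set w))" by auto
  then show ?thesis unfolding max_letter_def by (simp add: Max.insert)
qed

lemma le_Suc_max_letter_iff: "a \<le> Suc (max_letter w) \<longleftrightarrow> a \<le> 1 \<or> (\<exists>b\<in>set w. a \<le> Suc b)"
proof -
  have "a \<le> Suc (max_letter w) \<longleftrightarrow> a - 1 \<le> max_letter w" by arith
  also have "\<dots> \<longleftrightarrow> (\<exists>b\<in>insert 0 (set w). a - 1 \<le> b)"
    unfolding max_letter_def by (subst Max_ge_iff) auto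
  also have "\<dots> \<longleftrightarrow> a \<le> 1 \<or> (\<exists>b\<in>set w. a \<le> Suc b)" by (auto simp: le_diff_conv)
  finally show ?thesis .
qed

lemma rgf_Nil [simp]: "rgf []"
  unfolding rgf_def by simp

lemma rgf_snoc_iff: "rgf (w @ [a]) \<longleftrightarrow> rgf w \<and> 1 \<le> a \<and> (a \<le> 1 \<or> (\<exists>b\<in>set w. a \<le> Suc b))"
proof -
  have "rgf (w @ [a]) \<longleftrightarrow> rgf w \<and> 1 \<le> a \<and> a \<le> Suc (max_letter w)"
    unfolding rgf_def max_letter_def by (auto simp: nth_append less_Suc_eq)
  then show ?thesis by (simp add: le_Suc_max_letter_iff)
qed

lemma rgf_appendD: "rgf (u @ v) \<Longrightarrow> rgf u"
  by (induction v rule: rev_induct) (auto simp: rgf_snoc_iff simp flip: append_assoc)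

lemma rgf_set_eq: "rgf w \<Longrightarrow> set w = {1..max_letter w}"
proof (induction w rule: rev_induct)
  case Nil
  then show ?case by (simp add: max_letter_def)
next
  case (snoc a w)
  then have "set w = {1..max_letter w}" "1 \<le> a" "a \<le> Suc (max_letter w)"
    by (auto simp: rgf_snoc_iff le_Suc_max_letter_iff)
  then show ?case by (auto simp: max_letter_snoc)
qed

lemma rgf_letter_pos: "rgf w \<Longrightarrow> a \<in> set w \<Longrightarrow> 1 \<le> a"
  using rgf_set_eq by auto

lemma rgf_starts_with_one: "rgf w \<Longrightarrow> w \<noteq> [] \<Longrightarrow> \<exists>v. w = 1 # v"
  unfolding rgf_def by (cases w) force+

lemma shift_eq_shift_iff [simp]: "shift r s = shift r s' \<longleftrightarrow> s = s'"
  unfolding shift_def by (rule inj_map_eq_map) (simp add: inj_def)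

lemma shift_letters_gt:
  assumes "rgf w" "b \<in> set (shift r w)"
  shows "r < b"
proof -
  obtain a where "a \<in> set w" "b = a + r" using assms(2) by (auto simp: shift_def)
  moreover have "1 \<le> a" using rgf_letter_pos[OF assms(1) \<open>a \<in> set w\<close>] .
  ultimately show ?thesis by simp
qed

lemma nblocks_snoc_pos: "0 < nblocks (u @ [a])"
  by (simp add: nblocks_def card_gt_0_iff)

lemma nblocks_rgf: "rgf w \<Longrightarrow> nblocks w = max_letter w"
  unfolding nblocks_def by (simp add: rgf_set_eq)

lemma rgf_concat_part: "rgf \<alpha> \<Longrightarrow> rgf \<beta> \<Longrightarrow> rgf (concat_part \<alpha> \<beta>)"
proof (induction \<beta> rule: rev_induct)
  case Nil
  then show ?case by (simp add: concat_part_def shift_def)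
next
  case (snoc a \<beta>)
  let ?m = "max_letter \<alpha>"
  have IH: "rgf (\<alpha> @ shift ?m \<beta>)" and a: "1 \<le> a" "a \<le> 1 \<or> (\<exists>b\<in>set \<beta>. a \<le> Suc b)"
    using snoc by (auto simp: rgf_snoc_iff concat_part_def nblocks_rgf)
  have "a + ?m \<le> 1 \<or> (\<exists>b\<in>set (\<alpha> @ shift ?m \<beta>). a + ?m \<le> Suc b)"
  proof (cases "a \<le> 1")
    case True
    then show ?thesis using max_letter_in_set[of \<alpha>] a(1)
      by (cases "\<alpha> = []") (auto simp: max_letter_def intro!: bexI[of _ ?m])
  next
    case False
    then obtain b where "b \<in> set \<beta>" "a \<le> Suc b" using a by auto
    then show ?thesis by (intro disjI2 bexI[of _ "b + ?m"]) (auto simp: shift_def)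
  qed
  then show ?case
    using IH a snoc.prems(1) rgf_snoc_iff[of "\<alpha> @ shift ?m \<beta>" "a + ?m"]
    by (simp add: concat_part_def nblocks_rgf shift_def)
qed

lemma rgf_append_above:
  assumes "rgf (\<alpha> @ \<gamma>)" "\<forall>c\<in>set \<gamma>. max_letter \<alpha> < c"
  shows "rgf (map (\<lambda>c. c - max_letter \<alpha>) \<gamma>)"
  using assms
proof (induction \<gamma> rule: rev_induct)
  case Nil
  then show ?case by simp
next
  case (snoc a \<gamma>)
  let ?m = "max_letter \<alpha>"
  have IH: "rgf (map (\<lambda>c. c - ?m) \<gamma>)" and a: "a \<le> 1 \<or> (\<exists>b\<in>set (\<alpha> @ \<gamma>). a \<le> Suc b)"
      and above: "?m < a" "\<forall>c\<in>set \<gamma>. ?m < c"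
    using snoc by (auto simp: rgf_snoc_iff simp flip: append_assoc)
  have "a - ?m \<le> 1 \<or> (\<exists>b\<in>set (map (\<lambda>c. c - ?m) \<gamma>). a - ?m \<le> Suc b)"
    using a above le_max_letter[of _ \<alpha>] by fastforce
  then show ?case using IH above by (simp add: rgf_snoc_iff)
qed

lemma rgf_append_above_concat_part:
  assumes r: "rgf (\<alpha> @ \<gamma>)" and ne: "\<alpha> \<noteq> []" and above: "\<forall>a\<in>set \<alpha>. \<forall>c\<in>set \<gamma>. a < c"
  obtains \<beta> where "rgf \<beta>" "\<alpha> @ \<gamma> = concat_part \<alpha> \<beta>"
proof
  let ?m = "max_letter \<alpha>"
  have gt: "\<forall>c\<in>set \<gamma>. ?m < c" using above max_letter_in_set[OF ne] by blast
  show "rgf (map (\<lambda>c. c - ?m) \<gamma>)" using rgf_append_above[OF r gt] .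
  have "shift ?m (map (\<lambda>c. c - ?m) \<gamma>) = \<gamma>"
    using gt by (auto simp: shift_def intro!: map_idI)
  then show "\<alpha> @ \<gamma> = concat_part \<alpha> (map (\<lambda>c. c - ?m) \<gamma>)"
    using rgf_appendD[OF r] by (simp add: concat_part_def nblocks_rgf)
qed

lemma concat_part_one: "concat_part [1] w = 1 # shift 1 w"
  by (simp add: concat_part_def nblocks_def)

lemma concat_part_letters_less:
  assumes "rgf \<alpha>" "rgf \<beta>" "a \<in> set \<alpha>" "c \<in> set (shift (nblocks \<alpha>) \<beta>)"
  shows "a < c"
proof -
  have "a \<le> nblocks \<alpha>" using le_max_letter[OF assms(3)] nblocks_rgf[OF assms(1)] by simp
  also have "\<dots> < c" using shift_letters_gt[OF assms(2,4)] .
  finally show ?thesis .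
qed

lemma contains_concat_part_iff:
  assumes "order_connected p" "rgf \<alpha>" "rgf \<beta>"
  shows "contains (concat_part \<alpha> \<beta>) p \<longleftrightarrow> contains \<alpha> p \<or> contains \<beta> p"
  using contains_append_separated_iff[OF assms(1)] concat_part_letters_less[OF assms(2,3)]
  by (simp add: concat_part_def contains_shift_iff)

lemma connected_part_order_connected:
  assumes r: "rgf \<sigma>" and c: "connected_part \<sigma>"
  shows "order_connected \<sigma>"
  unfolding order_connected_def
proof (intro allI impI notI)
  fix k assume k: "0 < k" "k < length \<sigma>"
    and sep: "\<forall>i<k. \<forall>j. k \<le> j \<longrightarrow> j < length \<sigma> \<longrightarrow> \<sigma> ! i < \<sigma> ! j"
  have above: "\<forall>a\<in>set (take k \<sigma>). \<forall>c\<in>set (drop k \<sigma>). a < c"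
    using sep k by (auto simp: in_set_conv_nth)
  have ne: "take k \<sigma> \<noteq> []" "drop k \<sigma> \<noteq> []" using k by auto
  obtain \<beta> where \<beta>: "rgf \<beta>" "\<sigma> = concat_part (take k \<sigma>) \<beta>"
    using rgf_append_above_concat_part[of "take k \<sigma>" "drop k \<sigma>"] r ne(1) above by auto
  moreover have "length \<sigma> = k + length \<beta>"
    using arg_cong[OF \<beta>(2), of length] k by (simp add: concat_part_def shift_def)
  then have "\<beta> \<noteq> []" using k by auto
  moreover have "rgf (take k \<sigma>)" using rgf_appendD[of "take k \<sigma>" "drop k \<sigma>"] r by simp
  ultimately show False using c ne(1) unfolding connected_part_def by blast
qed

section \<open>Splitting a non-crossing partition at its last 1\<close>

lemma noncrossing_snoc_one:
  assumes "rgf u" "noncrossing u"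
  shows "noncrossing (u @ [1])"
proof -
  have "\<forall>a\<in>set u. 1 \<le> a" using rgf_letter_pos[OF assms(1)] by blast
  then show ?thesis
    using assms(2) contains_snoc_min_letter[of u 1 "[1, 2, 1, 2]" 0]
    unfolding noncrossing_def avoids_def by simp blast
qed

lemma noncrossing_concat_part:
  "rgf \<alpha> \<Longrightarrow> rgf \<beta> \<Longrightarrow> noncrossing \<alpha> \<Longrightarrow> noncrossing \<beta> \<Longrightarrow> noncrossing (concat_part \<alpha> \<beta>)"
  using contains_concat_part_iff[OF order_connected_1212] unfolding noncrossing_def avoids_def by blast

lemma length_concat_part_snoc_one: "length (concat_part (u @ [1]) s) = Suc (length u + length s)"
  by (simp add: concat_part_def shift_def)

lemma one_notin_shift_nblocks_snoc_one:
  assumes "rgf s"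
  shows "1 \<notin> set (shift (nblocks (u @ [1])) s)"
  using shift_letters_gt[OF assms, of 1 "nblocks (u @ [1])"] nblocks_snoc_pos[of u 1] by auto

lemma concat_part_snoc_one_eq_iff:
  assumes "rgf s" "rgf s'"
  shows "concat_part (u @ [1]) s = concat_part (u' @ [1]) s' \<longleftrightarrow> u = u' \<and> s = s'"
proof
  assume "concat_part (u @ [1]) s = concat_part (u' @ [1]) s'"
  then have "u @ 1 # shift (nblocks (u @ [1])) s = u' @ 1 # shift (nblocks (u' @ [1])) s'"
    by (simp add: concat_part_def)
  then have "u = u' \<and> shift (nblocks (u @ [1])) s = shift (nblocks (u' @ [1])) s'"
    using append_Cons_eq_iff_right[OF one_notin_shift_nblocks_snoc_one[OF assms(1)]
        one_notin_shift_nblocks_snoc_one[OF assms(2)]] by blast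
  then show "u = u' \<and> s = s'" by (elim conjE) simp
qed simp

lemma inj_on_concat_part_snoc_one:
  "inj_on (\<lambda>(u, s). concat_part (u @ [1]) s) (UNIV \<times> Collect rgf)"
proof (rule inj_onI)
  fix x y assume xy: "x \<in> UNIV \<times> Collect rgf" "y \<in> UNIV \<times> Collect rgf"
    "(\<lambda>(u, s). concat_part (u @ [1]) s) x = (\<lambda>(u, s). concat_part (u @ [1]) s) y"
  show "x = y"
  proof (cases x, cases y)
    fix u s u' s' assume "x = (u, s)" "y = (u', s')"
    then show "x = y" using xy concat_part_snoc_one_eq_iff[of s s' u u'] by simp
  qed
qed

lemma order_iso_1b1b: "2 \<le> b \<Longrightarrow> order_iso [1, b, 1, b] [1, 2, 1, 2]"
  unfolding order_iso_def by (simp add: All_less_Suc2 numeral_eq_Suc)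

lemma noncrossing_split_last_one:
  assumes r: "rgf w" and nc: "noncrossing w" and ne: "w \<noteq> []"
  obtains u s where "w = concat_part (u @ [1]) s" "rgf u" "rgf s" "noncrossing u" "noncrossing s"
proof -
  have "1 \<in> set w" using rgf_starts_with_one[OF r ne] by auto
  then obtain u v where w: "w = u @ 1 # v" and one: "1 \<notin> set v"
    using split_list_last by metis
  have ru1: "rgf (u @ [1])" using rgf_appendD[of "u @ [1]" v] r w by simp
  have ru: "rgf u" using rgf_appendD[OF ru1] .
  have above: "\<forall>a\<in>set (u @ [1]). \<forall>c\<in>set v. a < c"
  proof (intro ballI, rule ccontr)
    \<comment> \<open>a letter \<open>c \<ge> 2\<close> before and after the last 1 would give an occurrence \<open>1 c 1 c\<close> of 1212\<close>
    fix a c assume a: "a \<in> set (u @ [1])" and c: "c \<in> set v" and "\<not> a < c"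
    have "1 \<le> c" using rgf_letter_pos[OF r, of c] c w by simp
    then have c2: "2 \<le> c" using one c by (cases "c = 1") auto
    have "c \<le> max_letter (u @ [1])" using le_max_letter[OF a] \<open>\<not> a < c\<close> by linarith
    then have "c \<in> set (u @ [1])" using c2 unfolding rgf_set_eq[OF ru1] by simp
    then have "c \<in> set u" using c2 by simp
    moreover have "u \<noteq> []" using \<open>c \<in> set u\<close> by auto
    then obtain u' where u': "u = 1 # u'" using rgf_starts_with_one[OF ru] by blast
    ultimately have "subseq [c] u'" using c2 by (simp add: subseq_singleton_left)
    moreover have "subseq [c] v" using c by (simp add: subseq_singleton_left)
    ultimately have "subseq ([1, c] @ [1, c]) ((1 # u') @ (1 # v))"
      by (intro list_emb_append_mono) simp_all
    then have "subseq [1, c, 1, c] w" using w u' by simp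
    then have "contains w [1, 2, 1, 2]"
      using order_iso_1b1b[OF c2] unfolding contains_iff_subseq_order_iso by blast
    then show False using nc unfolding noncrossing_def avoids_def by blast
  qed
  obtain s where s: "rgf s" "w = concat_part (u @ [1]) s"
    using rgf_append_above_concat_part[of "u @ [1]" v] r w above by auto
  have "contains w p" if "contains u p" for p
    using contains_appendI1[OF that, of "1 # v"] w by simp
  then have "noncrossing u" using nc unfolding noncrossing_def avoids_def by blast
  moreover have "contains w p" if "contains s p" for p
    using contains_appendI2[of "shift (nblocks (u @ [1])) s" p "u @ [1]"] that s(2)
    by (simp add: concat_part_def contains_shift_iff)
  then have "noncrossing s" using nc unfolding noncrossing_def avoids_def by blast
  ultimately show ?thesis using that s ru by blast
qed

definition nc_words :: "(nat list \<Rightarrow> bool) \<Rightarrow> nat \<Rightarrow> nat list set" where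
  "nc_words P n = {w. rgf w \<and> length w = n \<and> noncrossing w \<and> P w}"

lemma nc_count_eq_card: "nc_count \<alpha> n = card (nc_words (\<lambda>w. avoids w \<alpha>) n)"
  unfolding nc_count_def nc_words_def ..

lemma finite_nc_words: "finite (nc_words P n)"
proof (rule finite_subset)
  have "set w \<subseteq> {0..length w}" if "rgf w" for w
    using rgf_set_eq[OF that] card_length[of w] by auto
  then show "nc_words P n \<subseteq> {w. set w \<subseteq> {0..n} \<and> length w = n}"
    unfolding nc_words_def by auto
  show "finite {w. set w \<subseteq> {0..n} \<and> length w = n}" by (rule finite_lists_length_eq) simp
qed

lemma nc_words_Suc_eq_image:
  assumes split: "\<And>u s. rgf u \<Longrightarrow> rgf s \<Longrightarrow> noncrossing u \<Longrightarrow> noncrossing s \<Longrightarrow>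
      P (concat_part (u @ [1]) s) \<longleftrightarrow> Q u \<and> R s"
  shows "nc_words P (Suc n) =
    (\<lambda>(u, s). concat_part (u @ [1]) s) ` (\<Union>i\<le>n. nc_words Q i \<times> nc_words R (n - i))"
proof (intro equalityI subsetI)
  fix w assume "w \<in> nc_words P (Suc n)"
  then have w: "rgf w" "length w = Suc n" "noncrossing w" "P w" unfolding nc_words_def by auto
  moreover have "w \<noteq> []" using w(2) by auto
  ultimately obtain u s where us: "w = concat_part (u @ [1]) s" "rgf u" "rgf s" "noncrossing u" "noncrossing s"
    using noncrossing_split_last_one by blast
  have "length u \<le> n" "u \<in> nc_words Q (length u)" "s \<in> nc_words R (n - length u)"
    using w us split[OF us(2-5)] length_concat_part_snoc_one[of u s] by (auto simp: nc_words_def)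
  then show "w \<in> (\<lambda>(u, s). concat_part (u @ [1]) s) ` (\<Union>i\<le>n. nc_words Q i \<times> nc_words R (n - i))"
    using us(1) by (intro image_eqI[where x = "(u, s)"]) auto
next
  fix w assume "w \<in> (\<lambda>(u, s). concat_part (u @ [1]) s) ` (\<Union>i\<le>n. nc_words Q i \<times> nc_words R (n - i))"
  then obtain u s i where w: "w = concat_part (u @ [1]) s" "i \<le> n"
    and "u \<in> nc_words Q i" "s \<in> nc_words R (n - i)" by auto
  then have u: "rgf u" "length u = i" "noncrossing u" "Q u"
    and s: "rgf s" "length s = n - i" "noncrossing s" "R s"
    unfolding nc_words_def by simp_all
  have "rgf w" using w(1) rgf_concat_part[of "u @ [1]" s] u(1) s(1) by (simp add: rgf_snoc_iff)
  moreover have "noncrossing w"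
    using w(1) noncrossing_concat_part[OF _ s(1) noncrossing_snoc_one[OF u(1,3)] s(3)] u(1)
    by (simp add: rgf_snoc_iff)
  moreover have "length w = Suc n" using w u(2) s(2) length_concat_part_snoc_one[of u s] by simp
  ultimately show "w \<in> nc_words P (Suc n)"
    using split[OF u(1) s(1) u(3) s(3)] u(4) s(4) w(1) unfolding nc_words_def by simp
qed

lemma card_nc_words_Suc:
  assumes split: "\<And>u s. rgf u \<Longrightarrow> rgf s \<Longrightarrow> noncrossing u \<Longrightarrow> noncrossing s \<Longrightarrow>
      P (concat_part (u @ [1]) s) \<longleftrightarrow> Q u \<and> R s"
  shows "card (nc_words P (Suc n)) = (\<Sum>i\<le>n. card (nc_words Q i) * card (nc_words R (n - i)))"
proof -
  let ?join = "\<lambda>(u, s). concat_part (u @ [1]) s"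
  let ?U = "\<Union>i\<le>n. nc_words Q i \<times> nc_words R (n - i)"
  have "?U \<subseteq> UNIV \<times> Collect rgf" by (auto simp: nc_words_def)
  then have "inj_on ?join ?U" by (rule inj_on_subset[OF inj_on_concat_part_snoc_one])
  moreover have "nc_words P (Suc n) = ?join ` ?U" by (rule nc_words_Suc_eq_image) (rule split)
  ultimately have "card (nc_words P (Suc n)) = card ?U" by (simp add: card_image)
  also have "\<dots> = (\<Sum>i\<le>n. card (nc_words Q i \<times> nc_words R (n - i)))"
  proof (rule card_UN_disjoint)
    show "\<forall>i\<in>{..n}. finite (nc_words Q i \<times> nc_words R (n - i))" by (simp add: finite_nc_words)
    show "\<forall>i\<in>{..n}. \<forall>j\<in>{..n}. i \<noteq> j \<longrightarrow>
        (nc_words Q i \<times> nc_words R (n - i)) \<inter> (nc_words Q j \<times> nc_words R (n - j)) = {}"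
      by (auto simp: nc_words_def)
  qed simp
  also have "\<dots> = (\<Sum>i\<le>n. card (nc_words Q i) * card (nc_words R (n - i)))"
    by (simp add: card_cartesian_product)
  finally show ?thesis .
qed

lemma nc_count_0: "p \<noteq> [] \<Longrightarrow> nc_count p 0 = 1"
proof -
  assume "p \<noteq> []"
  then have "nc_words (\<lambda>w. avoids w p) 0 = {[]}"
    by (auto simp: nc_words_def noncrossing_def avoids_def)
  then show ?thesis by (simp add: nc_count_eq_card)
qed

lemma convolution_recurrence_unique:
  fixes f g a :: "nat \<Rightarrow> 'a::comm_semiring_1"
  assumes "f 0 = g 0"
    and f: "\<And>n. f (Suc n) = (\<Sum>i\<le>n. f i * a (n - i))"
    and g: "\<And>n. g (Suc n) = (\<Sum>i\<le>n. a i * g (n - i))"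
  shows "f n = g n"
proof (induction n rule: less_induct)
  case (less n)
  show ?case
  proof (cases n)
    case 0
    then show ?thesis using assms(1) by simp
  next
    case (Suc m)
    have "f n = (\<Sum>i\<le>m. g i * a (m - i))" using f less Suc by simp
    also have "\<dots> = (\<Sum>i\<le>m. a (m - i) * g (m - (m - i)))"
      by (rule sum.cong) (simp_all add: mult.commute)
    also have "\<dots> = (\<Sum>i\<le>m. a i * g (m - i))"
      using sum.atLeastAtMost_rev[of "\<lambda>i. a i * g (m - i)" 0 m] by (simp add: atLeast0AtMost)
    also have "\<dots> = g n" using g Suc by simp
    finally show ?thesis .
  qed
qed

section \<open>The patterns \<open>1[\<sigma>]\<close> and \<open>1[\<rho>]1\<close>\<close>

lemma contains_lifted_patternD:
  assumes ru: "rgf u" and rs: "rgf s" and r\<sigma>: "rgf \<sigma>" and conn: "order_connected \<sigma>"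
    and "contains (concat_part (u @ [1]) s) (concat_part [1] \<sigma>)"
  shows "contains u (concat_part [1] \<sigma>) \<or> contains s \<sigma>"
proof -
  let ?S = "shift (nblocks (u @ [1])) s"
  have ru1: "rgf (u @ [1])" using ru by (simp add: rgf_snoc_iff)
  obtain q where q: "subseq q ((u @ [1]) @ ?S)" "order_iso q (1 # shift 1 \<sigma>)"
    using assms(5) unfolding contains_iff_subseq_order_iso concat_part_one concat_part_def[of "u @ [1]"]
    by blast
  then obtain x q' where qx: "q = x # q'" using order_iso_length[OF q(2)] by (cases q) auto
  have above: "\<forall>b\<in>set (shift 1 \<sigma>). 1 < b" using shift_letters_gt[OF r\<sigma>] by blast
  have iso: "order_iso q' \<sigma>" and x_less: "\<forall>a\<in>set q'. x < a"
    using order_iso_Cons_minD[OF q(2)[unfolded qx] above] by simp_all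
  from q(1) obtain q1 q2 where q12: "q = q1 @ q2" "subseq q1 (u @ [1])" "subseq q2 ?S"
    by (rule subseq_appendE)
  \<comment> \<open>\<open>\<sigma>\<close> is order-connected, so the tail \<open>q'\<close> cannot be split between the two halves\<close>
  have "subseq q' ?S \<or> subseq q (u @ [1])"
  proof (cases q1)
    case Nil
    then show ?thesis using q12 qx by (auto dest: subseq_Cons')
  next
    case (Cons x1 q1')
    then have q': "q' = q1' @ q2" using q12(1) qx by simp
    have "set q1' \<subseteq> set (u @ [1])" using set_subseq_subset[OF q12(2)] Cons by auto
    moreover have "set q2 \<subseteq> set ?S" using set_subseq_subset[OF q12(3)] .
    ultimately have "\<forall>a\<in>set q1'. \<forall>c\<in>set q2. a < c"
      using concat_part_letters_less[OF ru1 rs] by blast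
    then have "q1' = [] \<or> q2 = []" by (rule order_iso_append_separated[OF iso[unfolded q'] conn])
    then show ?thesis using q12 qx q' Cons by auto
  qed
  then show ?thesis
  proof
    assume "subseq q' ?S"
    then have "contains ?S \<sigma>" using iso unfolding contains_iff_subseq_order_iso by blast
    then show ?thesis by (simp add: contains_shift_iff)
  next
    assume "subseq q (u @ [1])"
    then have c: "contains (u @ [1]) (1 # shift 1 \<sigma>)"
      using q(2) unfolding contains_iff_subseq_order_iso by blast
    \<comment> \<open>the final 1 is a minimal letter, while the occurrence of \<open>1[\<sigma>]\<close> ends above its first letter\<close>
    show ?thesis
    proof (cases "\<sigma> = []")
      case False
      then have ne: "shift 1 \<sigma> \<noteq> []" by (simp add: shift_def)
      then have "1 < last (shift 1 \<sigma>)" using above last_in_set[OF ne] by blast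
      then have lt: "(1 # shift 1 \<sigma>) ! 0 < last (1 # shift 1 \<sigma>)" using ne by simp
      have "\<forall>a\<in>set u. 1 \<le> a" using rgf_letter_pos[OF ru] by blast
      then have "contains u (1 # shift 1 \<sigma>)" using contains_snoc_min_letter[OF c _ _ lt] by simp
      then show ?thesis unfolding concat_part_one ..
    qed simp
  qed
qed

lemma contains_lifted_pattern_iff:
  assumes ru: "rgf u" and rs: "rgf s" and r\<sigma>: "rgf \<sigma>" and conn: "order_connected \<sigma>"
  shows "contains (concat_part (u @ [1]) s) (concat_part [1] \<sigma>) \<longleftrightarrow>
    contains u (concat_part [1] \<sigma>) \<or> contains s \<sigma>"
proof
  let ?m = "nblocks (u @ [1])"
  assume "contains u (concat_part [1] \<sigma>) \<or> contains s \<sigma>"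
  then show "contains (concat_part (u @ [1]) s) (concat_part [1] \<sigma>)"
  proof
    assume "contains u (concat_part [1] \<sigma>)"
    then show ?thesis unfolding concat_part_def[of "u @ [1]"] append_assoc by (rule contains_appendI1)
  next
    assume "contains s \<sigma>"
    then obtain q where q: "subseq q s" "order_iso q \<sigma>"
      unfolding contains_iff_subseq_order_iso by blast
    have "subseq (shift ?m q) (shift ?m s)" using subseq_map[OF q(1)] by (simp add: shift_def)
    then have "subseq (1 # shift ?m q) (u @ 1 # shift ?m s)" by (simp add: subseq_drop_many)
    moreover have "order_iso (1 # shift ?m q) (1 # shift 1 \<sigma>)"
    proof (rule order_iso_Cons_min)
      show "order_iso (shift ?m q) (shift 1 \<sigma>)" using q(2) by simp
      have "0 < ?m" by (rule nblocks_snoc_pos)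
      moreover have "\<forall>a\<in>set q. 1 \<le> a"
        using set_subseq_subset[OF q(1)] rgf_letter_pos[OF rs] by blast
      ultimately show "\<forall>a\<in>set (shift ?m q). 1 < a" by (auto simp: shift_def)
      show "\<forall>b\<in>set (shift 1 \<sigma>). 1 < b" using shift_letters_gt[OF r\<sigma>] by blast
    qed
    ultimately show ?thesis
      unfolding contains_iff_subseq_order_iso concat_part_one concat_part_def[of "u @ [1]"]
      by (intro exI conjI) simp_all
  qed
qed (rule contains_lifted_patternD[OF assms])

lemma contains_snoc_one_wrapped_iff:
  assumes ru: "rgf u" and r\<rho>: "rgf \<rho>"
  shows "contains (u @ [1]) (concat_part [1] \<rho> @ [1]) \<longleftrightarrow> contains u (concat_part [1] \<rho>)"
proof
  assume "contains (u @ [1]) (concat_part [1] \<rho> @ [1])"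
  then obtain q where q: "subseq q (u @ [1])" "order_iso q (concat_part [1] \<rho> @ [1])"
    unfolding contains_iff_subseq_order_iso by blast
  from subseq_snocD[OF q(1)] show "contains u (concat_part [1] \<rho>)"
  proof
    assume "subseq q u"
    then have "contains u (concat_part [1] \<rho> @ [1])"
      using q(2) unfolding contains_iff_subseq_order_iso by blast
    then show ?thesis by (rule contains_append_patternD)
  next
    assume "\<exists>q'. q = q' @ [1] \<and> subseq q' u"
    then obtain q' where q': "q = q' @ [1]" "subseq q' u" by blast
    have "order_iso q' (concat_part [1] \<rho>)"
      using order_iso_take[OF q(2), of "length q'"] order_iso_length[OF q(2)] q'(1) by simp
    then show ?thesis using q'(2) unfolding contains_iff_subseq_order_iso by blast
  qed
next
  assume "contains u (concat_part [1] \<rho>)"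
  then obtain q where q: "subseq q u" "order_iso q (1 # shift 1 \<rho>)"
    unfolding contains_iff_subseq_order_iso concat_part_one by blast
  then obtain x q' where qx: "q = x # q'" using order_iso_length[OF q(2)] by (cases q) auto
  have above: "\<forall>b\<in>set (shift 1 \<rho>). 1 < b" using shift_letters_gt[OF r\<rho>] by blast
  have iso: "order_iso q' (shift 1 \<rho>)" and x_less: "\<forall>a\<in>set q'. x < a"
    using order_iso_Cons_minD[OF q(2)[unfolded qx] above] by blast+
  have "x \<in> set u" using set_subseq_subset[OF q(1)] qx by simp
  then have "1 \<le> x" by (rule rgf_letter_pos[OF ru])
  obtain u' where u': "u = 1 # u'" using rgf_starts_with_one[OF ru] \<open>x \<in> set u\<close> by fastforce
  have "subseq q' u'" using q(1) qx u' by (cases "x = 1") (auto dest: subseq_Cons')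
  then have "subseq (1 # q' @ [1]) (u @ [1])" using u' by simp
  moreover have "order_iso (1 # q' @ [1]) (1 # shift 1 \<rho> @ [1])"
  proof (rule order_iso_wrap[OF iso])
    show "\<forall>a\<in>set q'. 1 < a" using x_less \<open>1 \<le> x\<close> by auto
  qed (rule above)
  ultimately show "contains (u @ [1]) (concat_part [1] \<rho> @ [1])"
    unfolding contains_iff_subseq_order_iso concat_part_one by (intro exI conjI) simp_all
qed

lemma contains_wrapped_pattern_iff:
  assumes "rgf u" "rgf s" "rgf \<rho>"
  shows "contains (concat_part (u @ [1]) s) (concat_part [1] \<rho> @ [1]) \<longleftrightarrow>
    contains u (concat_part [1] \<rho>) \<or> contains s (concat_part [1] \<rho> @ [1])"
proof -
  have conn: "order_connected (concat_part [1] \<rho> @ [1])"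
    using order_connected_wrap[of 1 "shift 1 \<rho>"] unfolding concat_part_one by simp
  have "rgf (u @ [1])" using assms(1) by (simp add: rgf_snoc_iff)
  then show ?thesis
    using contains_concat_part_iff[OF conn _ assms(2)] contains_snoc_one_wrapped_iff[OF assms(1,3)]
    by simp
qed

lemma nc_count_lifted_Suc:
  assumes "rgf \<sigma>" "order_connected \<sigma>"
  shows "nc_count (concat_part [1] \<sigma>) (Suc n) =
    (\<Sum>i\<le>n. nc_count (concat_part [1] \<sigma>) i * nc_count \<sigma> (n - i))"
  unfolding nc_count_eq_card
  by (rule card_nc_words_Suc) (use contains_lifted_pattern_iff[OF _ _ assms] in \<open>unfold avoids_def, blast\<close>)

lemma nc_count_wrapped_Suc:
  assumes "rgf \<rho>"
  shows "nc_count (concat_part [1] \<rho> @ [1]) (Suc n) =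
    (\<Sum>i\<le>n. nc_count (concat_part [1] \<rho>) i * nc_count (concat_part [1] \<rho> @ [1]) (n - i))"
  unfolding nc_count_eq_card
  by (rule card_nc_words_Suc) (use contains_wrapped_pattern_iff[OF _ _ assms] in \<open>unfold avoids_def, blast\<close>)

theorem theorem3p8:
  fixes \<sigma> \<rho> \<tau> :: "nat list"
  assumes "rgf \<sigma>" and "noncrossing \<sigma>" and "connected_part \<sigma>"
    and "rgf \<rho>" and "noncrossing \<rho>"
    and "\<tau> = concat_part [1] \<rho>"
    and "nc_equiv \<sigma> \<tau>"
  shows "nc_equiv (concat_part [1] \<sigma>) (\<tau> @ [1])"
  unfolding nc_equiv_def
proof
  fix n
  have conn: "order_connected \<sigma>" using connected_part_order_connected assms(1,3) .
  have same: "nc_count \<sigma> = nc_count \<tau>" using assms(7) unfolding nc_equiv_def by blast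
  show "nc_count (concat_part [1] \<sigma>) n = nc_count (\<tau> @ [1]) n"
  proof (rule convolution_recurrence_unique[where f = "nc_count (concat_part [1] \<sigma>)"
        and g = "nc_count (\<tau> @ [1])" and a = "nc_count \<sigma>"])
    show "nc_count (concat_part [1] \<sigma>) 0 = nc_count (\<tau> @ [1]) 0"
      by (simp add: nc_count_0 concat_part_def)
    show "nc_count (concat_part [1] \<sigma>) (Suc m) =
        (\<Sum>i\<le>m. nc_count (concat_part [1] \<sigma>) i * nc_count \<sigma> (m - i))" for m
      using nc_count_lifted_Suc[OF assms(1) conn] .
    show "nc_count (\<tau> @ [1]) (Suc m) = (\<Sum>i\<le>m. nc_count \<sigma> i * nc_count (\<tau> @ [1]) (m - i))" for m
      using nc_count_wrapped_Suc[OF assms(4)] unfolding same assms(6) .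
  qed
qed

end
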